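(* There exists a curve $\Gamma$ in the Euclidean plane $\mathbb{R}^2$ such that $\mathcal{H}^1(\Gamma)<\infty$ and $S_{\Gamma,2-\epsilon}(\mathscr{G})=\infty$ for every multiresolution family $\mathscr{G}$ for $\Gamma$ (of any inflation factor $>1$) and every $\epsilon\in(0,2)$.
   Context: $\mathbb{R}^2$ carries the Euclidean norm. For a nonempty set $E\subset\mathbb{R}^2$ and a set $Q$ of positive diameter, the Jones beta number is $\beta_E(Q)=\inf_L\sup_{x\in E\cap Q}\mathrm{dist}(x,L)/\mathrm{diam}\,Q$ if $E\cap Q\neq\emptyset$, where $L$ ranges over all lines, and $\beta_E(Q)=0$ if $E\cap Q=\emptyset$. For $\rho>0$, a $\rho$-net for $E$ is a set $X\subset E$ such that $|y-z|\geq\rho$ for all distinct $y,z\in X$ and $\mathrm{dist}(x,X)<\rho$ for all $x\in E$. A multiresolution family for $E$ with inflation factor $A>1$ is the collection of closed balls $\mathscr{G}=\{B(x,A2^{-k}):x\in X_k,\ k\in\mathbb{Z}\}$ (indexed by the pairs $(k,x)$), where $(X_k)_{k\in\mathbb{Z}}$ is a nested family ($X_k\subset X_{k+1}$) and each $X_k$ is a $2^{-k}$-net for $E$. For $0<r<\infty$, $S_{E,r}(\mathscr{G})=\mathrm{diam}\,E+\sum_{Q\in\mathscr{G}}\beta_E(Q)^r\,\mathrm{diam}\,Q$. A curve is the image of a continuous map from $[0,1]$. *)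

theory Defs
  imports "HOL-Analysis.Analysis"
begin

type_synonym plane = "real ^ 2"

definition hausdorff_pre1 :: "real \<Rightarrow> plane set \<Rightarrow> ennreal" where
  "hausdorff_pre1 \<delta> E =
     (INF U \<in> {U :: nat \<Rightarrow> plane set. E \<subseteq> (\<Union>i. U i) \<and>
                 (\<forall>i. bounded (U i) \<and> diameter (U i) \<le> \<delta>)}.
        (\<Sum>i. ennreal (diameter (U i))))"

definition hausdorff1 :: "plane set \<Rightarrow> ennreal" where
  "hausdorff1 E = (SUP \<delta> \<in> {0<..}. hausdorff_pre1 \<delta> E)"

definition is_line :: "plane set \<Rightarrow> bool" where
  "is_line L \<longleftrightarrow> (\<exists>a v. v \<noteq> 0 \<and> L = {a + t *\<^sub>R v | t. True})"

definition jones_beta :: "plane set \<Rightarrow> plane set \<Rightarrow> real" where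
  "jones_beta E Q =
     (if E \<inter> Q = {} then 0
      else (INF L \<in> {L. is_line L}. (SUP x \<in> E \<inter> Q. infdist x L)) / diameter Q)"

definition is_net :: "real \<Rightarrow> plane set \<Rightarrow> plane set \<Rightarrow> bool" where
  "is_net \<rho> E X \<longleftrightarrow> X \<subseteq> E \<and> (\<forall>y\<in>X. \<forall>z\<in>X. y \<noteq> z \<longrightarrow> dist y z \<ge> \<rho>)
                        \<and> (\<forall>x\<in>E. \<exists>y\<in>X. dist x y < \<rho>)"

text \<open>A nested family of nets; the multiresolution family with inflation factor A
  is then the family of balls cball x (A * 2^-k), x in X k, indexed by (k,x).\<close>
definition nested_nets :: "plane set \<Rightarrow> (int \<Rightarrow> plane set) \<Rightarrow> bool" where
  "nested_nets E X \<longleftrightarrow> (\<forall>k. X k \<subseteq> X (k + 1)) \<and> (\<forall>k. is_net (2 powr (- real_of_int k)) E (X k))"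

definition S_sum :: "plane set \<Rightarrow> real \<Rightarrow> real \<Rightarrow> (int \<Rightarrow> plane set) \<Rightarrow> ennreal" where
  "S_sum E r A X = ennreal (diameter E) +
     (\<Sum>\<^sub>\<infinity> (k, x) \<in> Sigma UNIV X.
        ennreal (jones_beta E (cball x (A * 2 powr (- real_of_int k))) powr r
                 * diameter (cball x (A * 2 powr (- real_of_int k)))))"

end

theory Submission
  imports Defs "HOL-Real_Asymp.Real_Asymp"
begin

text \<open>The curve is the graph over \<open>[0, 1]\<close> of the Takagi-type function
  \<open>f x = (\<Sum>l. a\<^sub>l 2\<^sup>-\<^sup>l dist (2\<^sup>l x) \<int>)\<close> with \<open>a\<^sub>l = 1 / (sqrt (l + 3) ln (l + 3))\<close>, a sequence that is
  square summable while \<open>\<Sum> a\<^sub>l\<^sup>r = \<infinity>\<close> for \<open>r < 2\<close>.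
  On each dyadic interval of length \<open>2\<^sup>-\<^sup>J\<close> the partial sum \<open>\<Sum>l<J\<close> is affine with slope
  \<open>\<plusminus>a\<^sub>0 \<plusminus> \<dots> \<plusminus> a\<^sub>J\<^sub>-\<^sub>1\<close>; these slopes have mean square \<open>\<Sum> a\<^sub>l\<^sup>2 \<le> 2\<close>, which bounds the length of
  the dyadic polygonal approximations, hence \<open>H\<^sup>1\<close> of the graph.
  Conversely, over each dyadic interval of level \<open>j\<close> on which the slope is at most 2 (at least
  half of them) the graph contains a triangle of width \<open>2\<^sup>-\<^sup>j\<close> and height about \<open>a\<^sub>j 2\<^sup>-\<^sup>j\<close>, so every
  ball of radius about \<open>2\<^sup>-\<^sup>j\<close> around it has \<open>\<beta> \<ge> c a\<^sub>j\<close>. A net of comparable scale meets a fixed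
  fraction of these intervals, so level \<open>j\<close> contributes at least \<open>c a\<^sub>j\<^sup>r\<close> to the sum, which therefore
  diverges.\<close>

section \<open>Distance to the integers\<close>

lemma infdist_geI:
  assumes "A \<noteq> {}" "\<And>a. a \<in> A \<Longrightarrow> d \<le> dist x a"
  shows "d \<le> infdist x A"
  unfolding infdist_notempty[OF assms(1)] using assms by (intro cINF_greatest) auto

definition int_dist :: "real \<Rightarrow> real" where
  "int_dist x = infdist x \<int>"

lemma int_dist_nonneg: "0 \<le> int_dist x"
  by (simp add: int_dist_def infdist_nonneg)

lemma int_dist_eq:
  assumes "n \<in> \<int>" "\<bar>x - n\<bar> \<le> 1/2"
  shows "int_dist x = \<bar>x - n\<bar>"
proof (rule antisym)
  show "int_dist x \<le> \<bar>x - n\<bar>"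
    unfolding int_dist_def using infdist_le[OF assms(1), of x] by (simp add: dist_real_def)
  have "\<bar>x - n\<bar> \<le> dist x m" if "m \<in> \<int>" for m
  proof (cases "m = n")
    case False
    then have "1 \<le> \<bar>m - n\<bar>" using that assms(1) by (intro Ints_nonzero_abs_ge1) auto
    then show ?thesis
      using assms(2) abs_triangle_ineq[of "m - x" "x - n"] by (simp add: dist_real_def abs_minus_commute)
  qed (simp add: dist_real_def)
  then show "\<bar>x - n\<bar> \<le> int_dist x"
    unfolding int_dist_def using assms(1) by (intro infdist_geI) auto
qed

lemma int_dist_le_half: "int_dist x \<le> 1/2"
  using int_dist_eq[of "of_int (round x)" x] of_int_round_abs_le[of x] by (simp add: abs_minus_commute)

lemma int_dist_Ints: "n \<in> \<int> \<Longrightarrow> int_dist n = 0"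
  using int_dist_eq[of n n] by simp

lemma int_dist_half_interval:
  assumes "real i \<le> 2 * y" "2 * y \<le> real i + 1"
  shows "int_dist y = (if even i then 1 else -1) * (y - real ((i + 1) div 2))"
proof (cases "even i")
  case True
  then obtain k where "i = 2 * k" by blast
  then show ?thesis using assms int_dist_eq[of "real k" y] by simp
next
  case False
  then obtain k where "i = 2 * k + 1" by (blast elim: oddE)
  then show ?thesis using assms int_dist_eq[of "real k + 1" y] by (simp add: abs_if)
qed

section \<open>The coefficients\<close>

definition takagi_coeff :: "nat \<Rightarrow> real" where
  "takagi_coeff j = 1 / (sqrt (real j + 3) * ln (real j + 3))"

lemma takagi_coeff_pos: "0 < takagi_coeff j"
  unfolding takagi_coeff_def by (simp add: ln_gt_zero)

lemma takagi_coeff_le_1: "takagi_coeff j \<le> 1"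
proof -
  have "1 \<le> ln (real j + 3)"
    using ln_ge_iff[of "real j + 3" 1] exp_le by auto
  moreover have "1 \<le> sqrt (real j + 3)" by simp
  ultimately have "1 \<le> sqrt (real j + 3) * ln (real j + 3)"
    by (metis mult_mono' mult_1 order_trans zero_le_one)
  then show ?thesis unfolding takagi_coeff_def by simp
qed

text \<open>Telescoping bound, from \<open>1/(x+1) \<le> ln (x+1) - ln x\<close>.\<close>
lemma takagi_coeff_sq_le: "(takagi_coeff j)\<^sup>2 \<le> 1 / ln (real j + 2) - 1 / ln (real j + 3)"
proof -
  define x where "x = real j + 2"
  have x2: "x \<ge> 2" unfolding x_def by simp
  have ln_pos: "ln x > 0" "ln (x + 1) > 0" using x2 by (auto simp: ln_gt_zero)
  have "ln (x / (x + 1)) \<le> x / (x + 1) - 1" using x2 by (intro ln_le_minus_one) auto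
  also have "\<dots> = - 1 / (x + 1)" using x2 by (simp add: field_simps)
  finally have d: "1 / (x + 1) \<le> ln (x + 1) - ln x" using x2 by (simp add: ln_div)
  have "(takagi_coeff j)\<^sup>2 = (1 / (x + 1)) / (ln (x + 1) * ln (x + 1))"
    unfolding takagi_coeff_def x_def
    by (simp add: power_mult_distrib power_divide power2_eq_square add.commute add.left_commute)
  also have "\<dots> \<le> (ln (x + 1) - ln x) / (ln (x + 1) * ln (x + 1))"
    using d ln_pos by (intro divide_right_mono) auto
  also have "\<dots> \<le> (ln (x + 1) - ln x) / (ln x * ln (x + 1))"
    using ln_pos d x2 by (intro divide_left_mono mult_right_mono mult_pos_pos) auto
  also have "\<dots> = 1 / ln x - 1 / ln (x + 1)" using ln_pos by (simp add: field_simps)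
  finally show ?thesis unfolding x_def by (simp add: add.assoc)
qed

lemma sum_takagi_coeff_sq_le: "(\<Sum>l<J. (takagi_coeff l)\<^sup>2) \<le> 2"
proof -
  have "(\<Sum>l<J. (takagi_coeff l)\<^sup>2) \<le> 1 / ln 2 - 1 / ln (real J + 2)"
  proof (induction J)
    case (Suc J)
    then show ?case using takagi_coeff_sq_le[of J] by (simp add: add.commute add.left_commute)
  qed simp
  also have "\<dots> \<le> 1 / ln 2" using ln_gt_zero[of "real J + 2"] by simp
  also have "\<dots> \<le> 2" using ln2_ge_two_thirds by (simp add: field_simps)
  finally show ?thesis .
qed

lemma not_summable_takagi_coeff_powr:
  assumes "0 < r" "r < 2" "0 < C"
  shows "\<not> summable (\<lambda>j. (C * takagi_coeff j) powr r)"
proof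
  assume s: "summable (\<lambda>j. (C * takagi_coeff j) powr r)"
  have "eventually (\<lambda>j::nat. 1 / (real j + 3) \<le> (C / (sqrt (real j + 3) * ln (real j + 3))) powr r)
          sequentially"
    using assms by real_asymp
  then have "summable (\<lambda>j::nat. 1 / (real j + 3))"
    by (intro summable_comparison_test_ev[OF _ s]) (simp add: takagi_coeff_def)
  then have "summable (\<lambda>j::nat. inverse (real (j + 3)))"
    by (simp add: inverse_eq_divide add.commute)
  then have "summable (\<lambda>j::nat. inverse (real j))"
    by (subst (asm) summable_iff_shift)
  then show False
    using not_summable_harmonic[where 'a=real] by simp
qed

section \<open>The Takagi-type function\<close>

definition takagi_term :: "nat \<Rightarrow> real \<Rightarrow> real" where
  "takagi_term l x = takagi_coeff l / 2^l * int_dist (2^l * x)"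

definition takagi :: "real \<Rightarrow> real" where
  "takagi x = (\<Sum>l. takagi_term l x)"

definition takagi_partial :: "nat \<Rightarrow> real \<Rightarrow> real" where
  "takagi_partial J x = (\<Sum>l<J. takagi_term l x)"

text \<open>The slope of \<open>takagi_partial J\<close> on the \<open>i\<close>-th dyadic interval of length \<open>2^-J\<close>.\<close>
fun dyadic_slope :: "nat \<Rightarrow> nat \<Rightarrow> real" where
  "dyadic_slope 0 i = 0"
| "dyadic_slope (Suc J) i =
     dyadic_slope J (i div 2) + (if even i then takagi_coeff J else - takagi_coeff J)"

lemma takagi_term_nonneg: "0 \<le> takagi_term l x"
  unfolding takagi_term_def using takagi_coeff_pos[of l] int_dist_nonneg by simp

lemma takagi_term_le: "takagi_term l x \<le> (1/2)^l / 2"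
proof -
  have "takagi_term l x = takagi_coeff l * int_dist (2^l * x) / 2^l"
    unfolding takagi_term_def by simp
  also have "\<dots> \<le> 1 * (1/2) / 2^l"
    using takagi_coeff_le_1 takagi_coeff_pos[of l] int_dist_le_half int_dist_nonneg
    by (intro divide_right_mono mult_mono) auto
  finally show ?thesis by (simp add: power_divide)
qed

lemma summable_half_geometric: "summable (\<lambda>l::nat. (1/2::real)^l / 2)"
  by (intro summable_divide summable_geometric) simp

lemma summable_takagi_term: "summable (\<lambda>l. takagi_term l x)"
  by (rule summable_comparison_test[OF _ summable_half_geometric])
     (use takagi_term_nonneg takagi_term_le in auto)

lemma continuous_on_takagi: "continuous_on S takagi"
proof -
  have "uniform_limit UNIV (\<lambda>n x. \<Sum>l<n. takagi_term l x) takagi sequentially"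
    unfolding takagi_def[abs_def]
    by (rule Weierstrass_m_test[OF _ summable_half_geometric])
       (use takagi_term_nonneg takagi_term_le in auto)
  then have "continuous_on UNIV takagi"
    by (rule uniform_limit_theorem[rotated]) (auto intro!: always_eventually continuous_on_sum
        continuous_intros simp: takagi_term_def int_dist_def)
  then show ?thesis using continuous_on_subset by blast
qed

lemma takagi_tail:
  shows "0 \<le> takagi x - takagi_partial J x" "takagi x - takagi_partial J x \<le> (1/2)^J"
proof -
  have s: "summable (\<lambda>l. takagi_term (l + J) x)"
    using summable_ignore_initial_segment[OF summable_takagi_term] .
  have tail: "takagi x - takagi_partial J x = (\<Sum>l. takagi_term (l + J) x)"
    unfolding takagi_def takagi_partial_def
    using suminf_split_initial_segment[OF summable_takagi_term, of x J] by simp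
  show "0 \<le> takagi x - takagi_partial J x"
    unfolding tail using s takagi_term_nonneg by (intro suminf_nonneg) auto
  have "(\<Sum>l. takagi_term (l + J) x) \<le> (\<Sum>l. (1/2)^J * ((1/2::real)^l / 2))"
  proof (rule suminf_le[OF _ s summable_mult[OF summable_half_geometric]])
    show "takagi_term (l + J) x \<le> (1/2)^J * ((1/2::real)^l / 2)" for l
      using takagi_term_le[of "l + J"] by (simp add: power_add mult.commute)
  qed
  also have "\<dots> = (1/2)^J"
    using suminf_mult[OF summable_half_geometric, of "(1/2)^J"]
      suminf_divide[OF summable_geometric[of "1/2::real"], of 2] suminf_geometric[of "1/2::real"]
    by simp
  finally show "takagi x - takagi_partial J x \<le> (1/2)^J" unfolding tail .
qed

lemma takagi_term_dyadic: "J \<le> l \<Longrightarrow> takagi_term l (real i / 2^J) = 0"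
proof -
  assume "J \<le> l"
  then obtain d where "l = J + d" using le_Suc_ex by blast
  then have "(2::real)^l * (real i / 2^J) = real (i * 2^d)" by (simp add: power_add)
  then show ?thesis unfolding takagi_term_def by (simp add: int_dist_Ints)
qed

lemma takagi_dyadic: "takagi (real i / 2^J) = takagi_partial J (real i / 2^J)"
  unfolding takagi_def takagi_partial_def
  by (rule suminf_finite[of "{..<J}"]) (auto simp: takagi_term_dyadic)

lemma takagi_partial_Suc: "takagi_partial (Suc J) x = takagi_partial J x + takagi_term J x"
  unfolding takagi_partial_def by simp

lemma takagi_term_affine:
  assumes "real i / 2^Suc J \<le> x" "x \<le> (real i + 1) / 2^Suc J"
    and "real i / 2^Suc J \<le> y" "y \<le> (real i + 1) / 2^Suc J"
  shows "takagi_term J x - takagi_term J y = (if even i then takagi_coeff J else - takagi_coeff J) * (x - y)"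
proof -
  have "real i \<le> 2 * (2^J * z) \<and> 2 * (2^J * z) \<le> real i + 1"
    if "real i / 2^Suc J \<le> z" "z \<le> (real i + 1) / 2^Suc J" for z
    using that by (simp add: field_simps)
  then show ?thesis using assms
    by (simp add: takagi_term_def int_dist_half_interval field_simps)
qed

lemma takagi_partial_affine:
  assumes "real i / 2^J \<le> x" "x \<le> (real i + 1) / 2^J" "real i / 2^J \<le> y" "y \<le> (real i + 1) / 2^J"
  shows "takagi_partial J x - takagi_partial J y = dyadic_slope J i * (x - y)"
  using assms
proof (induction J arbitrary: i)
  case 0
  then show ?case by (simp add: takagi_partial_def)
next
  case (Suc J)
  have "i div 2 * 2 \<le> i" "i + 1 \<le> (i div 2 + 1) * 2" by presburger+
  then have lo: "real (i div 2) * 2 \<le> real i" and hi: "real i + 1 \<le> (real (i div 2) + 1) * 2"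
    by (simp_all only: of_nat_le_iff[symmetric] of_nat_mult of_nat_add) simp_all
  have "real (i div 2) / 2^J \<le> real i / 2^Suc J"
    using lo by (simp add: field_simps)
  moreover have "(real i + 1) / 2^Suc J \<le> (real (i div 2) + 1) / 2^J"
  proof -
    have "(real i + 1) / 2^Suc J \<le> (real (i div 2) + 1) * 2 / 2^Suc J"
      using hi by (rule divide_right_mono) simp
    also have "\<dots> = (real (i div 2) + 1) / 2^J" by (simp add: field_simps)
    finally show ?thesis .
  qed
  ultimately have "takagi_partial J x - takagi_partial J y = dyadic_slope J (i div 2) * (x - y)"
    using Suc.prems by (intro Suc.IH) auto
  then show ?case using takagi_term_affine[OF Suc.prems] by (simp add: takagi_partial_Suc algebra_simps)
qed

text \<open>The slopes on level \<open>J\<close> are the \<open>2^J\<close> sign combinations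
  \<open>\<plusminus>a\<^sub>0 \<plusminus> \<dots> \<plusminus> a\<^sub>J\<^sub>-\<^sub>1\<close>, so the cross terms cancel in the mean square.\<close>
lemma sum_dyadic_slope_sq: "(\<Sum>i<2^J. (dyadic_slope J i)\<^sup>2) = 2^J * (\<Sum>l<J. (takagi_coeff l)\<^sup>2)"
proof (induction J)
  case (Suc J)
  have split: "(\<Sum>i<2*n. F i) = (\<Sum>i<n. F (2*i) + F (2*i+1))" for F :: "nat \<Rightarrow> real" and n
    by (induction n) (auto simp: algebra_simps)
  have "(\<Sum>i<2^Suc J. (dyadic_slope (Suc J) i)\<^sup>2)
      = (\<Sum>i<2^J. (dyadic_slope (Suc J) (2*i))\<^sup>2 + (dyadic_slope (Suc J) (2*i+1))\<^sup>2)"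
    using split[of "\<lambda>i. (dyadic_slope (Suc J) i)\<^sup>2" "2^J"] by simp
  also have "\<dots> = (\<Sum>i<2^J. 2 * (dyadic_slope J i)\<^sup>2 + 2 * (takagi_coeff J)\<^sup>2)"
    by (intro sum.cong) (auto simp: power2_eq_square algebra_simps)
  also have "\<dots> = 2 * (\<Sum>i<2^J. (dyadic_slope J i)\<^sup>2) + 2^J * 2 * (takagi_coeff J)\<^sup>2"
    by (simp add: sum.distrib sum_distrib_left)
  finally show ?case using Suc.IH by (simp add: algebra_simps)
qed simp

lemma abs_dyadic_slope_le: "\<bar>dyadic_slope J i\<bar> \<le> real J"
proof (induction J arbitrary: i)
  case (Suc J)
  have "- real J \<le> dyadic_slope J (i div 2)" "dyadic_slope J (i div 2) \<le> real J"
    using Suc.IH[of "i div 2"] by auto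
  then show ?case using takagi_coeff_le_1[of J] takagi_coeff_pos[of J] by (auto simp: abs_le_iff)
qed simp

lemma card_small_dyadic_slope: "2^J \<le> 2 * real (card {i. i < (2::nat)^J \<and> \<bar>dyadic_slope J i\<bar> \<le> 2})"
proof -
  define G where "G = {i. i < (2::nat)^J \<and> \<bar>dyadic_slope J i\<bar> \<le> 2}"
  define B where "B = {i. i < (2::nat)^J \<and> \<not> \<bar>dyadic_slope J i\<bar> \<le> 2}"
  have "{..<2^J} = G \<union> B" "G \<inter> B = {}" "finite G" "finite B"
    unfolding G_def B_def by auto
  then have card: "real (card G) + real (card B) = 2^J"
    by (metis card_Un_disjoint card_lessThan of_nat_add of_nat_numeral of_nat_power)
  have "4 * real (card B) = (\<Sum>i\<in>B. 4)" by simp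
  also have "\<dots> \<le> (\<Sum>i\<in>B. (dyadic_slope J i)\<^sup>2)"
  proof (rule sum_mono)
    fix i assume "i \<in> B"
    then have "2 * 2 \<le> \<bar>dyadic_slope J i\<bar> * \<bar>dyadic_slope J i\<bar>"
      unfolding B_def by (intro mult_mono) auto
    then show "4 \<le> (dyadic_slope J i)\<^sup>2" by (simp add: power2_eq_square)
  qed
  also have "\<dots> \<le> (\<Sum>i<2^J. (dyadic_slope J i)\<^sup>2)"
    by (rule sum_mono2) (auto simp: B_def)
  also have "\<dots> \<le> 2^J * 2"
    unfolding sum_dyadic_slope_sq using sum_takagi_coeff_sq_le[of J] by (intro mult_left_mono) auto
  finally show ?thesis using card unfolding G_def[symmetric] by linarith
qed

section \<open>Determinants and beta numbers\<close>

definition det2 :: "plane \<Rightarrow> plane \<Rightarrow> real" where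
  "det2 u w = u$1 * w$2 - u$2 * w$1"

definition perp :: "plane \<Rightarrow> plane" where
  "perp v = vector [- v$2, v$1]"

lemma norm_plane: "norm (x :: plane) = sqrt ((x$1)\<^sup>2 + (x$2)\<^sup>2)"
  by (simp add: norm_vec_def L2_set_def sum_2)

lemma inner_plane: "inner (x :: plane) y = x$1 * y$1 + x$2 * y$2"
  by (simp add: inner_vec_def sum_2)

lemma det2_mult_norm_sq:
  "det2 u w * (norm v)\<^sup>2 = inner u v * inner w (perp v) - inner u (perp v) * inner w v"
  unfolding det2_def perp_def norm_plane by (simp add: inner_plane algebra_simps power2_eq_square)

lemma infdist_line_ge:
  assumes "L = {a + t *\<^sub>R v | t. True}" "v \<noteq> 0"
  shows "\<bar>inner (x - a) (perp v)\<bar> \<le> infdist x L * norm v"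
proof -
  have norm_perp: "norm (perp v) = norm v" unfolding perp_def by (simp add: norm_plane add.commute)
  have "\<bar>inner (x - a) (perp v)\<bar> / norm v \<le> dist x z" if "z \<in> L" for z
  proof -
    obtain t where z: "z = a + t *\<^sub>R v" using \<open>z \<in> L\<close> assms by auto
    have "inner v (perp v) = 0" unfolding perp_def by (simp add: inner_plane)
    then have "inner (x - a) (perp v) = inner (x - z) (perp v)"
      unfolding z by (simp add: inner_diff_left inner_add_left)
    also have "\<bar>\<dots>\<bar> \<le> norm (x - z) * norm (perp v)" by (rule Cauchy_Schwarz_ineq2)
    finally show ?thesis using assms(2) norm_perp by (simp add: dist_norm divide_le_eq)
  qed
  then have "\<bar>inner (x - a) (perp v)\<bar> / norm v \<le> infdist x L"
    using assms(1) by (intro infdist_geI) auto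
  then show ?thesis using assms(2) by (simp add: divide_le_eq)
qed

lemma abs_det2_le_near_line:
  assumes "is_line L" "infdist x1 L \<le> M" "infdist x2 L \<le> M" "infdist x3 L \<le> M"
  shows "\<bar>det2 (x2 - x1) (x3 - x1)\<bar> \<le> 2 * M * (norm (x2 - x1) + norm (x3 - x1))"
proof -
  obtain a v where L: "v \<noteq> 0" "L = {a + t *\<^sub>R v | t. True}"
    using assms(1) unfolding is_line_def by auto
  have nv: "0 < norm v" using L by simp
  have near: "\<bar>inner (x - a) (perp v)\<bar> \<le> M * norm v" if "infdist x L \<le> M" for x
    using infdist_line_ge[OF L(2,1), of x] that nv
    by (meson mult_right_mono norm_ge_zero order_trans)
  have u2: "\<bar>inner (x2 - x1) (perp v)\<bar> \<le> 2 * M * norm v"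
    using near[OF assms(2)] near[OF assms(3)] by (simp add: inner_diff_left abs_le_iff)
  have u3: "\<bar>inner (x3 - x1) (perp v)\<bar> \<le> 2 * M * norm v"
    using near[OF assms(2)] near[OF assms(4)] by (simp add: inner_diff_left abs_le_iff)
  have "\<bar>det2 (x2 - x1) (x3 - x1)\<bar> * (norm v)\<^sup>2
      = \<bar>inner (x2 - x1) v * inner (x3 - x1) (perp v) - inner (x2 - x1) (perp v) * inner (x3 - x1) v\<bar>"
    unfolding det2_mult_norm_sq[symmetric] by (simp add: abs_mult)
  also have "\<dots> \<le> \<bar>inner (x2 - x1) v\<bar> * \<bar>inner (x3 - x1) (perp v)\<bar>
                 + \<bar>inner (x2 - x1) (perp v)\<bar> * \<bar>inner (x3 - x1) v\<bar>"
    by (simp add: abs_mult[symmetric] abs_triangle_ineq4)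
  also have "\<dots> \<le> (norm (x2 - x1) * norm v) * (2 * M * norm v)
                 + (2 * M * norm v) * (norm (x3 - x1) * norm v)"
    using order_trans[OF infdist_nonneg assms(2)]
    by (intro add_mono mult_mono u2 u3 Cauchy_Schwarz_ineq2) auto
  also have "\<dots> = (2 * M * (norm (x2 - x1) + norm (x3 - x1))) * (norm v)\<^sup>2"
    by (simp add: algebra_simps power2_eq_square)
  finally show ?thesis using nv by simp
qed

lemma jones_beta_cball_ge:
  assumes "x1 \<in> E \<inter> cball y \<rho>" "x2 \<in> E \<inter> cball y \<rho>" "x3 \<in> E \<inter> cball y \<rho>" "0 < \<rho>"
    and "norm (x2 - x1) + norm (x3 - x1) \<le> P" "0 < P"
  shows "\<bar>det2 (x2 - x1) (x3 - x1)\<bar> / (4 * P * \<rho>) \<le> jones_beta E (cball y \<rho>)"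
proof -
  define Q where "Q = cball y \<rho>"
  define D where "D = \<bar>det2 (x2 - x1) (x3 - x1)\<bar>"
  have "D / (2 * P) \<le> (SUP x \<in> E \<inter> Q. infdist x L)" if L: "is_line L" for L
  proof -
    obtain a v where Lav: "L = {a + t *\<^sub>R v | t. True}" using L unfolding is_line_def by auto
    have "a \<in> L" unfolding Lav by (auto intro: exI[of _ 0])
    then have "infdist x L \<le> \<rho> + dist y a" if "x \<in> E \<inter> Q" for x
      using that infdist_le[of a L x] dist_triangle[of x a y] unfolding Q_def
      by (simp add: dist_commute)
    then have bdd: "bdd_above ((\<lambda>x. infdist x L) ` (E \<inter> Q))" by (rule bdd_aboveI2)
    define M where "M = (SUP x \<in> E \<inter> Q. infdist x L)"
    have M: "infdist x L \<le> M" if "x \<in> E \<inter> Q" for x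
      unfolding M_def using bdd that by (rule cSUP_upper2) simp
    have "D \<le> 2 * M * (norm (x2 - x1) + norm (x3 - x1))"
      unfolding D_def using abs_det2_le_near_line[OF L M M M] assms(1-3) unfolding Q_def by blast
    also have "\<dots> \<le> 2 * M * P"
      using assms(5) M[of x1] infdist_nonneg[of x1 L] assms(1) unfolding Q_def
      by (intro mult_left_mono) auto
    finally show ?thesis unfolding M_def using assms(6) by (simp add: divide_le_eq mult_ac)
  qed
  moreover have "{L. is_line L} \<noteq> {}"
    unfolding is_line_def by (auto intro!: exI[of _ "axis 1 1"] simp: axis_eq_0_iff)
  ultimately have "D / (2 * P) \<le> (INF L \<in> {L. is_line L}. (SUP x \<in> E \<inter> Q. infdist x L))"
    by (intro cINF_greatest) auto
  then have "D / (2 * P) / (2 * \<rho>)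
      \<le> (INF L \<in> {L. is_line L}. (SUP x \<in> E \<inter> Q. infdist x L)) / (2 * \<rho>)"
    by (rule divide_right_mono) (use assms(4) in simp)
  moreover have "E \<inter> Q \<noteq> {}" "diameter Q = 2 * \<rho>"
    using assms(1,4) unfolding Q_def by auto
  ultimately show ?thesis unfolding jones_beta_def Q_def D_def by (simp add: mult_ac)
qed

section \<open>The graph and its length\<close>

lemma hausdorff1_le_of_finite_covers:
  assumes "\<And>\<delta>. 0 < \<delta> \<Longrightarrow> \<exists>U (N :: nat). E \<subseteq> (\<Union>i<N. U i) \<and>
             (\<forall>i<N. bounded (U i) \<and> diameter (U i) \<le> \<delta>) \<and> (\<Sum>i<N. diameter (U i)) \<le> C"
  shows "hausdorff1 E \<le> ennreal C"
  unfolding hausdorff1_def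
proof (rule SUP_least)
  fix \<delta> :: real assume "\<delta> \<in> {0<..}"
  then obtain U and N :: nat where cov: "E \<subseteq> (\<Union>i<N. U i)"
    and U: "\<forall>i<N. bounded (U i) \<and> diameter (U i) \<le> \<delta>" and sum: "(\<Sum>i<N. diameter (U i)) \<le> C"
    using assms[of \<delta>] by auto
  define V where "V i = (if i < N then U i else {})" for i
  have "E \<subseteq> (\<Union>i. V i)" using cov by (auto simp: V_def)
  moreover have "bounded (V i) \<and> diameter (V i) \<le> \<delta>" for i
    using U \<open>\<delta> \<in> {0<..}\<close> by (simp add: V_def)
  ultimately have "hausdorff_pre1 \<delta> E \<le> (\<Sum>i. ennreal (diameter (V i)))"
    unfolding hausdorff_pre1_def by (intro INF_lower) simp
  also have "\<dots> = (\<Sum>i<N. ennreal (diameter (U i)))"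
    by (subst suminf_finite[of "{..<N}"]) (auto simp: V_def)
  also have "\<dots> = ennreal (\<Sum>i<N. diameter (U i))"
    using U by (intro sum_ennreal) (simp add: diameter_ge_0)
  also have "\<dots> \<le> ennreal C" using sum by (rule ennreal_leI)
  finally show "hausdorff_pre1 \<delta> E \<le> ennreal C" .
qed

definition takagi_graph :: "real \<Rightarrow> plane" where
  "takagi_graph t = vector [t, takagi t]"

lemma takagi_graph_nth [simp]: "takagi_graph t $ 1 = t" "takagi_graph t $ 2 = takagi t"
  unfolding takagi_graph_def by simp_all

lemma continuous_on_takagi_graph: "continuous_on S takagi_graph"
proof -
  have eq: "takagi_graph = (\<lambda>t. t *\<^sub>R axis 1 1 + takagi t *\<^sub>R axis 2 1)"
    by (auto simp: vec_eq_iff forall_2 axis_def)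
  show ?thesis unfolding eq by (intro continuous_intros continuous_on_takagi)
qed

lemma path_takagi_graph: "path takagi_graph"
  unfolding path_def by (rule continuous_on_takagi_graph)

lemma norm_takagi_graph_diff_le:
  "norm (takagi_graph x - takagi_graph y) \<le> \<bar>x - y\<bar> + \<bar>takagi x - takagi y\<bar>"
  using sqrt_sum_squares_le_sum_abs[of "x - y" "takagi x - takagi y"] by (simp add: norm_plane)

lemma abs_diff_le_norm_takagi_graph_diff: "\<bar>x - y\<bar> \<le> norm (takagi_graph x - takagi_graph y)"
  using component_le_norm_cart[of "takagi_graph x - takagi_graph y" 1] by simp

lemma takagi_dyadic_increments:
  fixes i j :: nat
  defines "p \<equiv> real i / 2^j" and "q \<equiv> (real i + 1) / 2^j" and "m \<equiv> (2 * real i + 1) / 2^Suc j"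
  shows "takagi q - takagi p = dyadic_slope j i / 2^j"
    "takagi m - takagi p = (dyadic_slope j i + takagi_coeff j) / 2^Suc j"
proof -
  have pm: "p \<le> m" "m \<le> q" unfolding p_def q_def m_def by (simp_all add: field_simps)
  have "takagi q - takagi p = takagi_partial j q - takagi_partial j p"
    using takagi_dyadic[of "i + 1" j] takagi_dyadic[of i j] by (simp add: p_def q_def add.commute)
  also have "\<dots> = dyadic_slope j i * (q - p)"
    using pm by (intro takagi_partial_affine) (auto simp: p_def q_def)
  finally show "takagi q - takagi p = dyadic_slope j i / 2^j"
    by (simp add: p_def q_def field_simps)
  have "takagi m = takagi_partial j m + takagi_term j m"
    using takagi_dyadic[of "2 * i + 1" "Suc j"] by (simp add: m_def takagi_partial_Suc add.commute)
  moreover have "takagi_partial j m - takagi_partial j p = dyadic_slope j i * (m - p)"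
    using pm by (intro takagi_partial_affine) (auto simp: p_def q_def)
  moreover have "takagi_term j m = takagi_coeff j / 2^Suc j"
  proof -
    have "(2::real)^j * m = real i + 1/2" unfolding m_def by (simp add: field_simps)
    then have half: "int_dist (2^j * m) = 1/2" using int_dist_eq[of "real i"] by simp
    show ?thesis unfolding takagi_term_def half by simp
  qed
  moreover have "takagi p = takagi_partial j p" unfolding p_def by (rule takagi_dyadic)
  ultimately show "takagi m - takagi p = (dyadic_slope j i + takagi_coeff j) / 2^Suc j"
    by (simp add: p_def m_def field_simps)
qed

text \<open>This triangle witnesses the large beta numbers: its area is of order \<open>a\<^sub>j 4\<^sup>-\<^sup>j\<close> while
  its sides are of order \<open>2\<^sup>-\<^sup>j\<close> when the slope is bounded.\<close>
lemma takagi_graph_dyadic_triangle: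
  fixes i j :: nat
  defines "p \<equiv> real i / 2^j" and "q \<equiv> (real i + 1) / 2^j" and "m \<equiv> (2 * real i + 1) / 2^Suc j"
  shows "det2 (takagi_graph q - takagi_graph p) (takagi_graph m - takagi_graph p) = takagi_coeff j / 2 / 4^j"
    "norm (takagi_graph q - takagi_graph p) \<le> (1 + \<bar>dyadic_slope j i\<bar>) / 2^j"
    "norm (takagi_graph m - takagi_graph p) \<le> (2 + \<bar>dyadic_slope j i\<bar>) / 2^j"
proof -
  note incr = takagi_dyadic_increments[of i j, folded p_def q_def m_def]
  have qp: "q - p = 1 / 2^j" and mp: "m - p = 1 / 2^Suc j"
    unfolding p_def q_def m_def by (simp_all add: field_simps)
  have "det2 (takagi_graph q - takagi_graph p) (takagi_graph m - takagi_graph p)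
      = (q - p) * (takagi m - takagi p) - (takagi q - takagi p) * (m - p)"
    unfolding det2_def by simp
  also have "\<dots> = takagi_coeff j / (2^j * 2^Suc j)"
    unfolding incr qp mp by (simp add: field_simps)
  also have "(2::real)^j * 2^Suc j = 2 * 4^j" by (simp flip: power_mult_distrib)
  finally show "det2 (takagi_graph q - takagi_graph p) (takagi_graph m - takagi_graph p) = takagi_coeff j / 2 / 4^j"
    by simp
  show "norm (takagi_graph q - takagi_graph p) \<le> (1 + \<bar>dyadic_slope j i\<bar>) / 2^j"
    using norm_takagi_graph_diff_le[of q p] incr qp by (simp add: abs_divide add_divide_distrib)
  have "norm (takagi_graph m - takagi_graph p) \<le> 1 / 2^Suc j + \<bar>dyadic_slope j i + takagi_coeff j\<bar> / 2^Suc j"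
    using norm_takagi_graph_diff_le[of m p] incr mp by (simp add: abs_divide)
  also have "\<dots> = (1 + \<bar>dyadic_slope j i + takagi_coeff j\<bar>) / 2^Suc j" by (simp add: add_divide_distrib)
  also have "\<dots> \<le> (2 * (2 + \<bar>dyadic_slope j i\<bar>)) / 2^Suc j"
    using takagi_coeff_pos[of j] takagi_coeff_le_1[of j] abs_triangle_ineq[of "dyadic_slope j i" "takagi_coeff j"]
    by (intro divide_right_mono) auto
  also have "\<dots> = (2 + \<bar>dyadic_slope j i\<bar>) / 2^j" by (simp add: field_simps)
  finally show "norm (takagi_graph m - takagi_graph p) \<le> (2 + \<bar>dyadic_slope j i\<bar>) / 2^j" .
qed

lemma norm_takagi_graph_diff_dyadic_le:
  assumes "real i / 2^J \<le> x" "x \<le> (real i + 1) / 2^J" "real i / 2^J \<le> y" "y \<le> (real i + 1) / 2^J"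
  shows "norm (takagi_graph x - takagi_graph y) \<le> (2 + \<bar>dyadic_slope J i\<bar>) / 2^J"
proof -
  have xy: "\<bar>x - y\<bar> \<le> 1 / 2^J" using assms by (simp add: abs_le_iff field_simps)
  define e where "e = (takagi x - takagi_partial J x) - (takagi y - takagi_partial J y)"
  have "takagi x - takagi y = dyadic_slope J i * (x - y) + e"
    using takagi_partial_affine[OF assms] by (simp add: e_def)
  moreover have "\<bar>e\<bar> \<le> 1 / 2^J"
    using takagi_tail[of x J] takagi_tail[of y J] by (simp add: e_def abs_le_iff power_divide)
  ultimately have "\<bar>takagi x - takagi y\<bar> \<le> \<bar>dyadic_slope J i\<bar> * \<bar>x - y\<bar> + 1 / 2^J"
    using abs_triangle_ineq[of "dyadic_slope J i * (x - y)" e] by (simp add: abs_mult)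
  also have "\<dots> \<le> \<bar>dyadic_slope J i\<bar> * (1 / 2^J) + 1 / 2^J"
    using xy by (intro add_mono mult_left_mono) auto
  also have "\<dots> = (2 + \<bar>dyadic_slope J i\<bar>) / 2^J - 1 / 2^J" by (simp add: field_simps)
  finally show ?thesis using norm_takagi_graph_diff_le[of x y] xy by linarith
qed

lemma dyadic_interval_exists:
  assumes "0 \<le> t" "t \<le> 1"
  shows "\<exists>i<2^J. real i / 2^J \<le> t \<and> t \<le> (real i + 1) / 2^J"
proof (cases "t = 1")
  case True
  have "real (2^J - 1 :: nat) = 2^J - 1" by (simp add: of_nat_diff)
  then show ?thesis using True by (intro exI[of _ "2^J - 1"]) (auto simp: field_simps)
next
  case False
  define k where "k = nat \<lfloor>t * 2^J\<rfloor>"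
  have "real k = of_int \<lfloor>t * 2^J\<rfloor>" unfolding k_def using assms by simp
  then have "real k \<le> t * 2^J" "t * 2^J < real k + 1" by linarith+
  moreover have "t * 2^J < 2^J" using assms False by simp
  ultimately have "real k < 2^J" by linarith
  then have "k < 2^J" by (metis of_nat_less_numeral_power_cancel_iff)
  then show ?thesis using \<open>real k \<le> t * 2^J\<close> \<open>t * 2^J < real k + 1\<close>
    by (intro exI[of _ k]) (auto simp: field_simps)
qed

lemma abs_le_one_plus_power2: "\<bar>x :: real\<bar> \<le> 1 + x\<^sup>2"
proof (cases "\<bar>x\<bar> \<le> 1")
  case False
  then have "\<bar>x\<bar> * 1 \<le> \<bar>x\<bar> * \<bar>x\<bar>" by (intro mult_left_mono) auto
  then show ?thesis by (simp add: power2_eq_square)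
qed (simp add: add_increasing2)

definition takagi_piece :: "nat \<Rightarrow> nat \<Rightarrow> plane set" where
  "takagi_piece J i = takagi_graph ` {real i / 2^J .. (real i + 1) / 2^J}"

lemma bounded_takagi_piece: "bounded (takagi_piece J i)"
  unfolding takagi_piece_def
  by (intro compact_imp_bounded compact_continuous_image continuous_on_takagi_graph compact_Icc)

lemma diameter_takagi_piece_le: "diameter (takagi_piece J i) \<le> (2 + \<bar>dyadic_slope J i\<bar>) / 2^J"
  unfolding takagi_piece_def by (auto intro!: diameter_le norm_takagi_graph_diff_dyadic_le)

lemma path_image_takagi_graph_subset: "path_image takagi_graph \<subseteq> (\<Union>i<2^J. takagi_piece J i)"
proof
  fix z assume "z \<in> path_image takagi_graph"
  then obtain t where t: "0 \<le> t" "t \<le> 1" "z = takagi_graph t"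
    unfolding path_image_def by auto
  then obtain i where "i < 2^J" "real i / 2^J \<le> t" "t \<le> (real i + 1) / 2^J"
    using dyadic_interval_exists by blast
  then have "z \<in> takagi_piece J i" unfolding takagi_piece_def using t(3) by auto
  then show "z \<in> (\<Union>i<2^J. takagi_piece J i)" using \<open>i < 2^J\<close> by blast
qed

lemma sum_diameter_takagi_piece_le: "(\<Sum>i<2^J. diameter (takagi_piece J i)) \<le> 5"
proof -
  have "(\<Sum>i<2^J. diameter (takagi_piece J i)) \<le> (\<Sum>i<(2::nat)^J. (3 + (dyadic_slope J i)\<^sup>2) / 2^J)"
  proof (rule sum_mono)
    fix i
    have "(2 + \<bar>dyadic_slope J i\<bar>) / 2^J \<le> (3 + (dyadic_slope J i)\<^sup>2) / 2^J"
      using abs_le_one_plus_power2[of "dyadic_slope J i"] by (intro divide_right_mono) auto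
    then show "diameter (takagi_piece J i) \<le> (3 + (dyadic_slope J i)\<^sup>2) / 2^J"
      using diameter_takagi_piece_le[of J i] by linarith
  qed
  also have "\<dots> = 3 + (\<Sum>l<J. (takagi_coeff l)\<^sup>2)"
    by (simp add: sum_divide_distrib[symmetric] sum.distrib sum_dyadic_slope_sq add_divide_distrib)
  also have "\<dots> \<le> 5" using sum_takagi_coeff_sq_le[of J] by simp
  finally show ?thesis .
qed

lemma hausdorff1_takagi_graph_le: "hausdorff1 (path_image takagi_graph) \<le> 5"
proof -
  have "\<exists>U (N :: nat). path_image takagi_graph \<subseteq> (\<Union>i<N. U i) \<and>
          (\<forall>i<N. bounded (U i) \<and> diameter (U i) \<le> \<delta>) \<and> (\<Sum>i<N. diameter (U i)) \<le> 5"
    if "0 < \<delta>" for \<delta>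
  proof -
    have "(\<lambda>J::nat. (2 + real J) / 2^J) \<longlonglongrightarrow> 0" by real_asymp
    from order_tendstoD(2)[OF this \<open>0 < \<delta>\<close>] obtain J where J: "(2 + real J) / 2^J < \<delta>"
      by (auto simp: eventually_sequentially)
    have "diameter (takagi_piece J i) \<le> \<delta>" for i
    proof -
      have "(2 + \<bar>dyadic_slope J i\<bar>) / 2^J \<le> (2 + real J) / 2^J"
        using abs_dyadic_slope_le[of J i] by (intro divide_right_mono) auto
      then show ?thesis using diameter_takagi_piece_le[of J i] J by linarith
    qed
    then show ?thesis
      using path_image_takagi_graph_subset sum_diameter_takagi_piece_le bounded_takagi_piece
      by (intro exI[of _ "takagi_piece J"] exI[of _ "2^J"]) blast
  qed
  then show ?thesis using hausdorff1_le_of_finite_covers[of "path_image takagi_graph" 5] by simp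
qed

section \<open>Beta numbers along the graph\<close>

lemma takagi_graph_in_path_image: "t \<in> {0..1} \<Longrightarrow> takagi_graph t \<in> path_image takagi_graph"
  unfolding path_image_def by blast

lemma jones_beta_takagi_graph_ge:
  fixes i j :: nat
  assumes "i < 2^j" "\<bar>dyadic_slope j i\<bar> \<le> 2"
    and "dist (takagi_graph (real i / 2^j)) y < \<delta>" "\<delta> + 4 / 2^j \<le> \<rho>"
  shows "takagi_coeff j / (56 * 2^j * \<rho>) \<le> jones_beta (path_image takagi_graph) (cball y \<rho>)"
proof -
  define p where "p = real i / 2^j"
  define q where "q = (real i + 1) / 2^j"
  define m where "m = (2 * real i + 1) / 2^Suc j"
  note tri = takagi_graph_dyadic_triangle[of i j, folded p_def q_def m_def]
  have "real (i + 1) \<le> real ((2::nat)^j)" using assms(1) by (simp only: of_nat_le_iff)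
  then have "p \<in> {0..1}" "q \<in> {0..1}" "m \<in> {0..1}"
    using less_imp_le[OF assms(1)] unfolding p_def q_def m_def by (auto simp: field_simps)
  then have E: "takagi_graph p \<in> path_image takagi_graph" "takagi_graph q \<in> path_image takagi_graph"
    "takagi_graph m \<in> path_image takagi_graph"
    by (simp_all add: takagi_graph_in_path_image)
  have "(1 + \<bar>dyadic_slope j i\<bar>) / 2^j \<le> 3 / 2^j" "(2 + \<bar>dyadic_slope j i\<bar>) / 2^j \<le> 4 / 2^j"
    using assms(2) by (auto intro: divide_right_mono)
  then have pq: "dist (takagi_graph p) (takagi_graph q) \<le> 3 / 2^j"
    and pm: "dist (takagi_graph p) (takagi_graph m) \<le> 4 / 2^j"
    using tri(2,3) by (simp_all add: dist_norm norm_minus_commute)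
  have yp: "dist y (takagi_graph p) < \<delta>" using assms(3) by (simp add: p_def dist_commute)
  have "(3::real) / 2^j \<le> 4 / 2^j" "(0::real) < 4 / 2^j" by (simp_all add: divide_right_mono)
  moreover have "dist y (takagi_graph x) \<le> dist y (takagi_graph p) + dist (takagi_graph p) (takagi_graph x)" for x
    by (rule dist_triangle)
  ultimately have "dist y (takagi_graph p) \<le> \<rho>" "dist y (takagi_graph q) \<le> \<rho>" "dist y (takagi_graph m) \<le> \<rho>"
    and rho_pos: "0 < \<rho>"
    using yp pq pm assms(4) zero_le_dist[of y "takagi_graph p"] by (smt (verit))+
  then have "takagi_graph p \<in> cball y \<rho>" "takagi_graph q \<in> cball y \<rho>" "takagi_graph m \<in> cball y \<rho>"
    by simp_all
  moreover have "norm (takagi_graph q - takagi_graph p) + norm (takagi_graph m - takagi_graph p) \<le> 7 / 2^j"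
    using pq pm by (simp add: dist_norm norm_minus_commute)
  ultimately have "\<bar>takagi_coeff j / 2 / 4^j\<bar> / (4 * (7 / 2^j) * \<rho>)
      \<le> jones_beta (path_image takagi_graph) (cball y \<rho>)"
    using E rho_pos jones_beta_cball_ge[of "takagi_graph p" _ y \<rho> "takagi_graph q" "takagi_graph m" "7 / 2^j"]
    unfolding tri(1) by simp
  moreover have "\<bar>takagi_coeff j / 2 / 4^j\<bar> / (4 * (7 / 2^j) * \<rho>) = takagi_coeff j / (56 * 2^j * \<rho>)"
  proof -
    have "(4::real)^j = 2^j * 2^j" by (simp flip: power_mult_distrib)
    then show ?thesis using takagi_coeff_pos[of j] by simp
  qed
  ultimately show ?thesis by simp
qed

lemma card_le_mult_card_image_of_narrow_fibres:
  fixes G :: "nat set"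
  assumes "finite G" and narrow: "\<And>i i'. i \<in> G \<Longrightarrow> i' \<in> G \<Longrightarrow> f i = f i' \<Longrightarrow> i' < i + K"
  shows "card G \<le> K * card (f ` G)"
proof -
  have fibre: "card {i \<in> G. f i = y} \<le> K" for y
  proof (cases "{i \<in> G. f i = y} = {}")
    case False
    define i0 where "i0 = Min {i \<in> G. f i = y}"
    have "i0 \<in> {i \<in> G. f i = y}" unfolding i0_def using False assms(1) by (intro Min_in) auto
    have "{i \<in> G. f i = y} \<subseteq> {i0..<i0 + K}"
    proof
      fix i assume i: "i \<in> {i \<in> G. f i = y}"
      then have "i0 \<le> i" unfolding i0_def using assms(1) by (intro Min_le) auto
      moreover have "i < i0 + K" using narrow \<open>i0 \<in> {i \<in> G. f i = y}\<close> i by auto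
      ultimately show "i \<in> {i0..<i0 + K}" by simp
    qed
    then show ?thesis using card_mono[OF finite_atLeastLessThan, of _ i0 "i0 + K"] by simp
  qed (metis card.empty zero_le)
  have "G = (\<Union>y\<in>f ` G. {i \<in> G. f i = y})" by auto
  then have "card G \<le> (\<Sum>y\<in>f ` G. card {i \<in> G. f i = y})"
    by (metis card_UN_le assms(1) finite_imageI)
  also have "\<dots> \<le> (\<Sum>y\<in>f ` G. K)" by (intro sum_mono fibre)
  finally show ?thesis by (simp add: mult.commute)
qed

text \<open>Points of a net of scale \<open>2^d/2^j\<close> close to the vertices \<open>i/2^j\<close> of slope at most 2 are
  shared by at most \<open>2^(d+1)\<close> vertices, since projecting the graph to the first axis does not
  increase distances.\<close>
lemma card_image_net_points_ge:
  fixes j d :: nat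
  defines "G \<equiv> {i. i < (2::nat)^j \<and> \<bar>dyadic_slope j i\<bar> \<le> 2}"
  assumes near: "\<And>i. i \<in> G \<Longrightarrow> dist (takagi_graph (real i / 2^j)) (ys i) < 2^d / 2^j"
  shows "2^j \<le> 2^Suc (Suc d) * real (card (ys ` G))"
proof -
  have "card G \<le> 2^Suc d * card (ys ` G)"
  proof (rule card_le_mult_card_image_of_narrow_fibres)
    fix i i' assume i: "i \<in> G" and i': "i' \<in> G" and same: "ys i = ys i'"
    have "dist (takagi_graph (real i / 2^j)) (ys i) < 2^d / 2^j"
      "dist (takagi_graph (real i' / 2^j)) (ys i) < 2^d / 2^j"
      using near[OF i] near[OF i'] unfolding same by auto
    then have "dist (takagi_graph (real i / 2^j)) (takagi_graph (real i' / 2^j)) < 2 * (2^d / 2^j)"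
      using dist_triangle2[of "takagi_graph (real i / 2^j)" "takagi_graph (real i' / 2^j)" "ys i"]
      by linarith
    then have "\<bar>real i / 2^j - real i' / 2^j\<bar> < 2 * (2^d / 2^j)"
      using abs_diff_le_norm_takagi_graph_diff by (simp add: dist_norm) (meson le_less_trans)
    then have "real i' < real i + 2^Suc d"
      by (simp add: diff_divide_distrib[symmetric] abs_less_iff field_simps)
    then show "i' < i + 2^Suc d" by (metis of_nat_add of_nat_less_iff of_nat_numeral of_nat_power)
  qed (simp add: G_def)
  then have "real (card G) \<le> 2^Suc d * real (card (ys ` G))"
    using of_nat_mono by fastforce
  then show ?thesis using card_small_dyadic_slope[of j] unfolding G_def by simp
qed

lemma takagi_level_sum_ge:
  fixes j d :: nat and A r :: real
  assumes "1 < A" "4 \<le> (A - 1) * 2^d" "0 \<le> r"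
    and net: "is_net (2^d / 2^j) (path_image takagi_graph) Y"
  defines "\<rho> \<equiv> A * 2^d / 2^j"
  shows "\<exists>F \<subseteq> Y. finite F \<and> (takagi_coeff j / (56 * A * 2^d)) powr r / 2
           \<le> (\<Sum>y\<in>F. jones_beta (path_image takagi_graph) (cball y \<rho>) powr r * diameter (cball y \<rho>))"
proof -
  define E where "E = path_image takagi_graph"
  define b where "b = (takagi_coeff j / (56 * A * 2^d)) powr r"
  have "0 < \<rho>" unfolding \<rho>_def using assms(1) by simp
  define G where "G = {i. i < (2::nat)^j \<and> \<bar>dyadic_slope j i\<bar> \<le> 2}"
  have "\<forall>i\<in>G. \<exists>y. y \<in> Y \<and> dist (takagi_graph (real i / 2^j)) y < 2^d / 2^j"
  proof
    fix i assume "i \<in> G"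
    then have "real i / 2^j \<in> {0..1}" by (auto simp: G_def field_simps)
    then show "\<exists>y. y \<in> Y \<and> dist (takagi_graph (real i / 2^j)) y < 2^d / 2^j"
      using net takagi_graph_in_path_image unfolding is_net_def by blast
  qed
  then obtain ys
    where ys: "\<And>i. i \<in> G \<Longrightarrow> ys i \<in> Y \<and> dist (takagi_graph (real i / 2^j)) (ys i) < 2^d / 2^j"
    by (metis bchoice)
  have "2^d / 2^j + 4 / 2^j \<le> \<rho>"
    using assms(2) unfolding \<rho>_def by (simp add: add_divide_distrib[symmetric] divide_right_mono algebra_simps)
  then have beta: "b \<le> jones_beta E (cball (ys i) \<rho>) powr r" if "i \<in> G" for i
    using jones_beta_takagi_graph_ge[of i j "ys i" "2^d / 2^j" \<rho>] ys[OF that] that takagi_coeff_pos[of j] assms(1,3)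
    unfolding b_def E_def G_def \<rho>_def by (auto intro!: powr_mono2)
  have "2^j \<le> 2^Suc (Suc d) * real (card (ys ` G))"
    using ys unfolding G_def by (intro card_image_net_points_ge) auto
  also have "\<dots> \<le> A * (2^Suc (Suc d) * real (card (ys ` G)))"
    using mult_right_mono[of 1 A "2^Suc (Suc d) * real (card (ys ` G))"] assms(1) by simp
  finally have half: "1 / 2 \<le> real (card (ys ` G)) * (2 * \<rho>)"
    unfolding \<rho>_def by (simp add: field_simps)
  have "0 \<le> b" unfolding b_def by simp
  from mult_left_mono[OF half this]
  have "b / 2 \<le> real (card (ys ` G)) * (b * (2 * \<rho>))" by (simp add: mult_ac)
  also have "\<dots> = (\<Sum>y\<in>ys ` G. b * diameter (cball y \<rho>))"
    using \<open>0 < \<rho>\<close> by simp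
  also have "\<dots> \<le> (\<Sum>y\<in>ys ` G. jones_beta E (cball y \<rho>) powr r * diameter (cball y \<rho>))"
    using beta by (intro sum_mono mult_right_mono) (auto simp: diameter_cball)
  finally have "b / 2 \<le> (\<Sum>y\<in>ys ` G. jones_beta E (cball y \<rho>) powr r * diameter (cball y \<rho>))" .
  moreover have "ys ` G \<subseteq> Y" "finite (ys ` G)" using ys by (auto simp: G_def)
  ultimately show ?thesis unfolding b_def E_def by blast
qed

section \<open>Divergence of the beta sum\<close>

lemma infsum_ennreal_eq_top:
  fixes f :: "'a \<Rightarrow> real"
  assumes "\<And>x. x \<in> S \<Longrightarrow> 0 \<le> f x" and "\<And>B. \<exists>F. finite F \<and> F \<subseteq> S \<and> B \<le> sum f F"
  shows "(\<Sum>\<^sub>\<infinity>x\<in>S. ennreal (f x)) = \<infinity>"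
proof (rule ccontr)
  assume "(\<Sum>\<^sub>\<infinity>x\<in>S. ennreal (f x)) \<noteq> \<infinity>"
  then obtain s where s: "(\<Sum>\<^sub>\<infinity>x\<in>S. ennreal (f x)) = ennreal s" "0 \<le> s"
    by (cases "(\<Sum>\<^sub>\<infinity>x\<in>S. ennreal (f x))" rule: ennreal_cases) auto
  obtain F where F: "finite F" "F \<subseteq> S" "s + 1 \<le> sum f F" using assms(2) by blast
  then have "ennreal (s + 1) \<le> ennreal (sum f F)" by (intro ennreal_leI) simp
  also have "\<dots> = (\<Sum>\<^sub>\<infinity>x\<in>F. ennreal (f x))"
    using F assms(1) by (simp add: sum_ennreal infsum_finite subset_iff)
  also have "\<dots> \<le> (\<Sum>\<^sub>\<infinity>x\<in>S. ennreal (f x))"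
    using F(2) by (intro infsum_mono_neutral nonneg_summable_on_complete) auto
  finally show False using s by (simp add: ennreal_le_iff)
qed

lemma not_summable_imp_unbounded:
  fixes f :: "nat \<Rightarrow> real"
  assumes "\<not> summable f" "\<And>n. 0 \<le> f n"
  shows "\<exists>N. B \<le> (\<Sum>n<N. f n)"
proof (rule ccontr)
  assume "\<not> ?thesis"
  then have "(\<Sum>n<N. f n) \<le> B" for N by (simp add: not_le less_imp_le)
  then have "summable f" using assms(2) by (rule summableI_nonneg_bounded[rotated])
  with assms(1) show False ..
qed

definition multires_term :: "plane set \<Rightarrow> real \<Rightarrow> real \<Rightarrow> int \<times> plane \<Rightarrow> real" where
  "multires_term E r A =
     (\<lambda>(k, x). jones_beta E (cball x (A * 2 powr (- real_of_int k))) powr r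
                 * diameter (cball x (A * 2 powr (- real_of_int k))))"

lemma S_sum_eq_infsum:
  "S_sum E r A X = ennreal (diameter E) + (\<Sum>\<^sub>\<infinity>z\<in>Sigma UNIV X. ennreal (multires_term E r A z))"
  unfolding S_sum_def multires_term_def by (simp add: case_prod_unfold)

lemma multires_term_nonneg: "0 \<le> multires_term E r A z"
  unfolding multires_term_def by (auto simp: diameter_cball split: prod.split)

lemma takagi_multires_level_sum_ge:
  fixes j d :: nat
  assumes "1 < A" "4 \<le> (A - 1) * 2^d" "0 \<le> r" "nested_nets (path_image takagi_graph) X"
  shows "\<exists>F \<subseteq> X (int j - int d). finite F \<and> (takagi_coeff j / (56 * A * 2^d)) powr r / 2
           \<le> (\<Sum>y\<in>F. multires_term (path_image takagi_graph) r A (int j - int d, y))"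
proof -
  have radius: "2 powr (- real_of_int (int j - int d)) = 2^d / 2^j"
    by (simp add: powr_diff powr_realpow)
  then have "is_net (2^d / 2^j) (path_image takagi_graph) (X (int j - int d))"
    using assms(4) unfolding nested_nets_def by metis
  moreover have "multires_term (path_image takagi_graph) r A (int j - int d, y)
      = jones_beta (path_image takagi_graph) (cball y (A * 2^d / 2^j)) powr r
          * diameter (cball y (A * 2^d / 2^j))" for y
    unfolding multires_term_def prod.case radius by simp
  ultimately show ?thesis
    using takagi_level_sum_ge[OF assms(1-3)] by (simp add: mult.assoc)
qed

lemma S_sum_takagi_graph_eq_top:
  assumes "1 < A" "nested_nets (path_image takagi_graph) X" "0 < r" "r < 2"
  shows "S_sum (path_image takagi_graph) r A X = \<infinity>"
proof -
  define w where "w = multires_term (path_image takagi_graph) r A"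
  obtain d :: nat where "4 / (A - 1) < 2^d" using real_arch_pow[of 2 "4 / (A - 1)"] by auto
  then have d: "4 \<le> (A - 1) * 2^d" using assms(1) by (simp add: divide_less_eq mult.commute)
  define C where "C = 1 / (56 * A * 2^d)"
  have C: "0 < C" unfolding C_def using assms(1) by simp
  have "\<exists>F \<subseteq> X (int j - int d). finite F \<and> (C * takagi_coeff j) powr r / 2
          \<le> (\<Sum>y\<in>F. w (int j - int d, y))" for j
    using takagi_multires_level_sum_ge[OF assms(1) d less_imp_le[OF assms(3)] assms(2)]
    unfolding w_def C_def by simp
  then obtain F where F: "\<And>j. F j \<subseteq> X (int j - int d)" "\<And>j. finite (F j)"
    "\<And>j. (C * takagi_coeff j) powr r / 2 \<le> (\<Sum>y\<in>F j. w (int j - int d, y))"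
    by metis
  have "\<exists>S. finite S \<and> S \<subseteq> Sigma UNIV X \<and> B \<le> sum w S" for B
  proof -
    obtain N where N: "2 * B \<le> (\<Sum>j<N. (C * takagi_coeff j) powr r)"
      using not_summable_imp_unbounded[OF not_summable_takagi_coeff_powr[OF assms(3,4) C]] by auto
    define S where "S = (\<Union>j<N. Pair (int j - int d) ` F j)"
    have "sum w S = (\<Sum>j<N. \<Sum>y\<in>F j. w (int j - int d, y))"
      unfolding S_def using F(2)
      by (subst sum.UNION_disjoint) (auto simp: sum.reindex inj_on_def)
    also have "\<dots> \<ge> (\<Sum>j<N. (C * takagi_coeff j) powr r / 2)" by (intro sum_mono F(3))
    finally have "B \<le> sum w S" using N by (simp add: sum_divide_distrib[symmetric])
    moreover have "finite S" "S \<subseteq> Sigma UNIV X" unfolding S_def using F(1,2) by auto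
    ultimately show ?thesis by blast
  qed
  then have "(\<Sum>\<^sub>\<infinity>z\<in>Sigma UNIV X. ennreal (w z)) = \<infinity>"
    by (intro infsum_ennreal_eq_top) (simp_all add: w_def multires_term_nonneg)
  then show ?thesis unfolding S_sum_eq_infsum w_def by simp
qed

theorem mainTheorem7:
  shows "\<exists>g :: real \<Rightarrow> plane. path g \<and> hausdorff1 (path_image g) < \<infinity> \<and>
     (\<forall>A X \<epsilon>. A > 1 \<longrightarrow> nested_nets (path_image g) X \<longrightarrow> 0 < \<epsilon> \<longrightarrow> \<epsilon> < 2 \<longrightarrow>
        S_sum (path_image g) (2 - \<epsilon>) A X = \<infinity>)"
proof (intro exI[of _ takagi_graph] conjI allI impI)
  show "path takagi_graph" by (rule path_takagi_graph)
  show "hausdorff1 (path_image takagi_graph) < \<infinity>"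
    using hausdorff1_takagi_graph_le by (rule le_less_trans) simp
  fix A :: real and X and \<epsilon> :: real
  assume "A > 1" "nested_nets (path_image takagi_graph) X" "0 < \<epsilon>" "\<epsilon> < 2"
  then show "S_sum (path_image takagi_graph) (2 - \<epsilon>) A X = \<infinity>"
    by (intro S_sum_takagi_graph_eq_top) auto
qed

end
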